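(* Assume the loss $f(\cdot,z)$ is convex and $\beta$-smooth for all $z\in\mathcal{Z}$. Consider full-batch GD with $T$ iterations and learning rates $\eta_t\le1/(2\beta)$ for all $t\le T+1$. Then for the outputs $W_{T+1}\equiv A(S)$, $W^{(i)}_{T+1}\equiv A(S^{(i)})$, $$\epsilon_{\mathrm{stab}(A)}\le\frac{4\,\epsilon_{\mathrm{path}}}{n^2}\sum_{t=1}^T\eta_t\le\frac{32\beta\sum_{t=1}^T\eta_t}{n^2}\left(\mathbb{E}[\|W_1-W^*_S\|_2^2]+\epsilon_{\mathbf{c}}\sum_{t=1}^T\eta_t\right).$$
   Context: Let $\mathcal{D}$ be a distribution on $\mathcal{Z}$ and $z_1,\dots,z_n,z_i'$ i.i.d. from $\mathcal{D}$; $S=(z_1,\dots,z_n)$, $S^{(i)}$ is $S$ with $z_i$ replaced by $z_i'$. The loss $f:\mathbb{R}^d\times\mathcal{Z}\to[0,\infty)$ is non-negative; $\beta$-smooth means $\|\nabla f(w,z)-\nabla f(u,z)\|_2\le\beta\|w-u\|_2$. $R_S(w)=\frac1n\sum_j f(w,z_j)$, $W^*_S$ a minimizer of $R_S$ (assumed to exist). Full-batch GD on $S$: from a fixed $W_1$, $W_{t+1}=W_t-\frac{\eta_t}{n}\sum_{j=1}^n\nabla f(W_t,z_j)$, $t=1,\dots,T$, output $A(S)=W_{T+1}$; $W^{(i)}_t$ are the GD iterates on $S^{(i)}$ from the same $W_1$ with the same step sizes. Definitions: $\epsilon_{\mathrm{stab}(A)}=\mathbb{E}[\|A(S)-A(S^{(i)})\|_2^2]$;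 $\epsilon_{\mathrm{path}}=\sum_{t=1}^T\eta_t\mathbb{E}[\|\nabla f(W_t,z_i)\|_2^2]$; $\epsilon_{\mathbf{c}}=\mathbb{E}[R_S(W^*_S)]$. *)

theory Defs
  imports "HOL-Probability.Probability"
begin

text \<open>The sample S is a function on indices 0..n-1
  (index j corresponds to z_{j+1} in the paper). gd_iter grad eta n W1 S k is the
  paper's iterate W_{k+1}: gd_iter ... 0 = W_1 and
  W_{t+1} = W_t - (eta t / n) * sum_j grad W_t z_j.\<close>

primrec gd_iter :: "('a::real_normed_vector \<Rightarrow> 'z \<Rightarrow> 'a) \<Rightarrow> (nat \<Rightarrow> real) \<Rightarrow> nat \<Rightarrow> 'a
    \<Rightarrow> (nat \<Rightarrow> 'z) \<Rightarrow> nat \<Rightarrow> 'a" where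
  "gd_iter grad eta n W1 S 0 = W1"
| "gd_iter grad eta n W1 S (Suc k) =
     gd_iter grad eta n W1 S k
       - (eta (Suc k) / real n) *\<^sub>R (\<Sum>j<n. grad (gd_iter grad eta n W1 S k) (S j))"

definition emp_risk :: "('a \<Rightarrow> 'z \<Rightarrow> real) \<Rightarrow> nat \<Rightarrow> (nat \<Rightarrow> 'z) \<Rightarrow> 'a \<Rightarrow> real" where
  "emp_risk f n S w = (\<Sum>j<n. f w (S j)) / real n"

end

theory Submission
  imports Defs
begin

text \<open>Co-coercivity of the gradients of a convex \<open>\<beta>\<close>-smooth loss makes a gradient step over the
  \<open>n - 1\<close> samples shared by \<open>S\<close> and \<open>S(i := z')\<close> non-expansive once \<open>\<eta>\<^sub>t \<le> 1/(2\<beta>)\<close>, so the two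
  runs drift apart only through the replaced sample, by at most \<open>\<eta>\<^sub>t/n\<close> times the two gradient
  norms at that sample in step \<open>t\<close>. Cauchy-Schwarz, and the fact that \<open>(S, z')\<close> and
  \<open>(S(i := z'), z\<^sub>i)\<close> have the same law, give the first inequality. For the second, the
  self-bounding property \<open>\<parallel>\<nabla>f\<parallel>\<^sup>2 \<le> 2\<beta>f\<close> of non-negative smooth losses and exchangeability of the
  sample (the loss at \<open>z\<^sub>i\<close> has the mean of the empirical risk) reduce \<open>\<epsilon>\<^sub>p\<^sub>a\<^sub>t\<^sub>h\<close> to the regret
  bound \<open>\<Sum>\<^sub>t \<eta>\<^sub>t R\<^sub>S(W\<^sub>t) \<le> \<parallel>W\<^sub>1 - w\<parallel>\<^sup>2 + 2 R\<^sub>S(w) \<Sum>\<^sub>t \<eta>\<^sub>t\<close> of gradient descent.\<close>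

lemma gderiv_along_line:
  fixes g :: "'a::real_inner \<Rightarrow> real"
  assumes "\<And>w. GDERIV g w :> G w"
  shows "((\<lambda>t. g (x + t *\<^sub>R d)) has_real_derivative (G (x + t *\<^sub>R d) \<bullet> d)) (at t)"
proof -
  have "((\<lambda>t. x + t *\<^sub>R d) has_derivative (\<lambda>s. s *\<^sub>R d)) (at t)"
    by (auto intro!: derivative_eq_intros)
  moreover have "(g has_derivative (\<lambda>h. h \<bullet> G (x + t *\<^sub>R d))) (at (x + t *\<^sub>R d))"
    using assms by (simp add: gderiv_def)
  ultimately have "((\<lambda>t. g (x + t *\<^sub>R d)) has_derivative (\<lambda>s. (s *\<^sub>R d) \<bullet> G (x + t *\<^sub>R d))) (at t)"
    by (rule has_derivative_compose)
  moreover have "(\<lambda>s. (s *\<^sub>R d) \<bullet> G (x + t *\<^sub>R d)) = (*) (G (x + t *\<^sub>R d) \<bullet> d)"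
    by (auto simp: fun_eq_iff inner_commute)
  ultimately show ?thesis
    by (simp add: has_field_derivative_def)
qed

lemma gderiv_lipschitz_upper_bound:
  fixes g :: "'a::real_inner \<Rightarrow> real"
  assumes gderiv: "\<And>w. GDERIV g w :> G w"
    and lipschitz: "\<And>w u. norm (G w - G u) \<le> b * norm (w - u)"
  shows "g y \<le> g x + G x \<bullet> (y - x) + b / 2 * (norm (y - x))\<^sup>2"
proof -
  define d where "d = y - x"
  define k where "k t = g (x + t *\<^sub>R d) - t * (G x \<bullet> d) - b / 2 * t\<^sup>2 * (norm d)\<^sup>2" for t
  have "k 1 \<le> k 0"
  proof (rule DERIV_nonpos_imp_nonincreasing[of 0 1 k])
    fix t :: real assume t: "0 \<le> t" "t \<le> 1"
    let ?k' = "G (x + t *\<^sub>R d) \<bullet> d - G x \<bullet> d - b * t * (norm d)\<^sup>2"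
    have "(k has_real_derivative ?k') (at t)"
      unfolding k_def using gderiv_along_line[OF gderiv, of x d t]
      by (auto intro!: derivative_eq_intros simp: power2_eq_square)
    moreover have "(G (x + t *\<^sub>R d) - G x) \<bullet> d \<le> b * t * (norm d)\<^sup>2"
    proof -
      have "(G (x + t *\<^sub>R d) - G x) \<bullet> d \<le> norm (G (x + t *\<^sub>R d) - G x) * norm d"
        by (rule norm_cauchy_schwarz)
      also have "\<dots> \<le> b * norm (t *\<^sub>R d) * norm d"
        using lipschitz[of "x + t *\<^sub>R d" x] by (intro mult_right_mono) auto
      finally show ?thesis using t by (simp add: power2_eq_square mult.assoc)
    qed
    ultimately show "\<exists>k'. (k has_real_derivative k') (at t) \<and> k' \<le> 0"
      by (auto simp: inner_diff_left)
  qed simp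
  then show ?thesis by (simp add: k_def d_def)
qed

lemma convex_gderiv_lower_bound:
  fixes g :: "'a::real_inner \<Rightarrow> real"
  assumes gderiv: "\<And>w. GDERIV g w :> G w"
    and convex: "convex_on UNIV g"
  shows "g x + G x \<bullet> (y - x) \<le> g y"
proof -
  define d where "d = y - x"
  define \<phi> where "\<phi> t = g (x + t *\<^sub>R d)" for t
  have convex_\<phi>: "convex_on UNIV \<phi>"
  proof (rule convex_onI)
    fix t a b :: real assume t: "0 < t" "t < 1"
    have "x + ((1 - t) *\<^sub>R a + t *\<^sub>R b) *\<^sub>R d = (1 - t) *\<^sub>R (x + a *\<^sub>R d) + t *\<^sub>R (x + b *\<^sub>R d)"
      by (simp add: algebra_simps)
    then show "\<phi> ((1 - t) *\<^sub>R a + t *\<^sub>R b) \<le> (1 - t) * \<phi> a + t * \<phi> b"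
      unfolding \<phi>_def using convex_onD[OF convex, of t "x + a *\<^sub>R d" "x + b *\<^sub>R d"] t by simp
  qed simp
  moreover have "(\<phi> has_real_derivative (G x \<bullet> d)) (at 0 within UNIV)"
    unfolding \<phi>_def using gderiv_along_line[OF gderiv, of x d 0] by simp
  ultimately have "\<phi> 1 - \<phi> 0 \<ge> (G x \<bullet> d) * (1 - 0)"
    by (intro convex_on_imp_above_tangent) auto
  then show ?thesis by (simp add: \<phi>_def d_def)
qed

text \<open>One gradient step of length \<open>1/b\<close> decreases \<open>g\<close> by at least \<open>\<parallel>G x\<parallel>\<^sup>2/(2b)\<close>,
  and \<open>g\<close> cannot drop below \<open>0\<close>.\<close>

lemma gderiv_lipschitz_nonneg_self_bound:
  fixes g :: "'a::real_inner \<Rightarrow> real"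
  assumes gderiv: "\<And>w. GDERIV g w :> G w"
    and lipschitz: "\<And>w u. norm (G w - G u) \<le> b * norm (w - u)"
    and b: "b > 0" and nonneg: "\<And>w. g w \<ge> 0"
  shows "(norm (G x))\<^sup>2 \<le> 2 * b * g x"
proof -
  define y where "y = x - (1/b) *\<^sub>R G x"
  have "0 \<le> g y" by (rule nonneg)
  also have "\<dots> \<le> g x + G x \<bullet> (y - x) + b / 2 * (norm (y - x))\<^sup>2"
    by (rule gderiv_lipschitz_upper_bound[OF gderiv lipschitz])
  also have "\<dots> = g x - (norm (G x))\<^sup>2 / (2 * b)"
    using b by (simp add: y_def power2_eq_square power_mult_distrib inner_commute field_simps
        flip: power2_norm_eq_inner)
  finally show ?thesis using b by (simp add: field_simps)
qed

text \<open>Apply the convexity lower bound at \<open>x\<close> and the smoothness upper bound at \<open>y\<close> to the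
  point \<open>y - (G y - G x)/b\<close>.\<close>

lemma convex_gderiv_lipschitz_lower_bound:
  fixes g :: "'a::real_inner \<Rightarrow> real"
  assumes gderiv: "\<And>w. GDERIV g w :> G w"
    and convex: "convex_on UNIV g"
    and lipschitz: "\<And>w u. norm (G w - G u) \<le> b * norm (w - u)"
    and b: "b > 0"
  shows "g x + G x \<bullet> (y - x) + (norm (G y - G x))\<^sup>2 / (2 * b) \<le> g y"
proof -
  define u where "u = G y - G x"
  define z where "z = y - (1/b) *\<^sub>R u"
  have "g x + G x \<bullet> (z - x) \<le> g z"
    by (rule convex_gderiv_lower_bound[OF gderiv convex])
  moreover have "g z \<le> g y + G y \<bullet> (z - y) + b / 2 * (norm (z - y))\<^sup>2"
    by (rule gderiv_lipschitz_upper_bound[OF gderiv lipschitz])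
  moreover have "G y \<bullet> (z - y) - G x \<bullet> (z - x) = - (norm u)\<^sup>2 / b - G x \<bullet> (y - x)"
    by (simp add: z_def u_def power2_norm_eq_inner inner_diff_left inner_diff_right inner_commute
        algebra_simps add_divide_distrib diff_divide_distrib)
  moreover have "b / 2 * (norm (z - y))\<^sup>2 = (norm u)\<^sup>2 / (2 * b)"
    using b by (simp add: z_def power2_eq_square field_simps)
  moreover have "(norm u)\<^sup>2 / b = 2 * ((norm u)\<^sup>2 / (2 * b))"
    by simp
  ultimately show ?thesis
    unfolding u_def by linarith
qed

lemma convex_gderiv_lipschitz_cocoercive:
  fixes g :: "'a::real_inner \<Rightarrow> real"
  assumes gderiv: "\<And>w. GDERIV g w :> G w"
    and convex: "convex_on UNIV g"
    and lipschitz: "\<And>w u. norm (G w - G u) \<le> b * norm (w - u)"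
    and b: "b > 0"
  shows "(norm (G x - G y))\<^sup>2 \<le> b * ((G x - G y) \<bullet> (x - y))"
proof -
  have "g x + G x \<bullet> (y - x) + (norm (G y - G x))\<^sup>2 / (2 * b) \<le> g y"
    and "g y + G y \<bullet> (x - y) + (norm (G x - G y))\<^sup>2 / (2 * b) \<le> g x"
    by (rule convex_gderiv_lipschitz_lower_bound[OF assms])+
  moreover have "G x \<bullet> (y - x) + G y \<bullet> (x - y) = - ((G x - G y) \<bullet> (x - y))"
    by (simp add: inner_diff_left inner_diff_right)
  ultimately have "(norm (G x - G y))\<^sup>2 / b \<le> (G x - G y) \<bullet> (x - y)"
    by (simp add: norm_minus_commute field_simps)
  then show ?thesis using b by (simp add: field_simps)
qed

lemma cocoercive_sum_step_nonexpansive: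
  fixes u :: "'b \<Rightarrow> 'a::real_inner" and b c :: real
  assumes J: "finite J" and cocoercive: "\<And>j. j \<in> J \<Longrightarrow> (norm (u j))\<^sup>2 \<le> b * (u j \<bullet> d)"
    and b: "b > 0" and c: "c \<ge> 0" and step: "c * card J * b \<le> 2"
  shows "norm (d - c *\<^sub>R (\<Sum>j\<in>J. u j)) \<le> norm d"
proof -
  define U where "U = (\<Sum>j\<in>J. u j)"
  define s where "s = (\<Sum>j\<in>J. (norm (u j))\<^sup>2)"
  have "s \<le> (\<Sum>j\<in>J. b * (u j \<bullet> d))"
    unfolding s_def by (rule sum_mono) (rule cocoercive)
  also have "\<dots> = b * (d \<bullet> U)"
    by (simp add: U_def sum_distrib_left inner_sum_right inner_commute)
  finally have dU: "s / b \<le> d \<bullet> U"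
    using b by (simp add: field_simps)
  have "(norm U)\<^sup>2 \<le> (\<Sum>j\<in>J. norm (u j))\<^sup>2"
    unfolding U_def by (simp add: power_mono norm_sum)
  also have "\<dots> \<le> s * card J"
    unfolding s_def by (rule sum_squared_le_sum_of_squares)
  finally have U2: "(norm U)\<^sup>2 \<le> s * card J" .
  have "(norm (d - c *\<^sub>R U))\<^sup>2 = (norm d)\<^sup>2 - 2 * c * (d \<bullet> U) + c\<^sup>2 * (norm U)\<^sup>2"
    unfolding power2_norm_eq_inner
    by (simp add: inner_diff_left inner_diff_right inner_commute power2_eq_square algebra_simps)
  also have "\<dots> \<le> (norm d)\<^sup>2 - 2 * c * (s / b) + c\<^sup>2 * (s * card J)"
    using dU U2 c by (intro add_mono diff_mono mult_left_mono) auto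
  also have "\<dots> = (norm d)\<^sup>2 - c * s * (2 - c * card J * b) / b"
    using b by (simp add: field_simps power2_eq_square)
  also have "\<dots> \<le> (norm d)\<^sup>2"
    using b c step by (simp add: s_def sum_nonneg)
  finally show ?thesis
    by (simp add: power_mono_iff[symmetric] abs_le_square_iff U_def)
qed

lemma weighted_sum_squared_le:
  fixes w x :: "'b \<Rightarrow> real"
  assumes "\<And>t. t \<in> I \<Longrightarrow> w t \<ge> 0"
  shows "(\<Sum>t\<in>I. w t * x t)\<^sup>2 \<le> (\<Sum>t\<in>I. w t) * (\<Sum>t\<in>I. w t * (x t)\<^sup>2)"
proof -
  have "(\<Sum>t\<in>I. w t * x t) = (\<Sum>t\<in>I. sqrt (w t) * (sqrt (w t) * x t))"
    using assms by (intro sum.cong) (auto simp: mult.assoc[symmetric])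
  also have "(\<dots>)\<^sup>2 \<le> (\<Sum>t\<in>I. (sqrt (w t))\<^sup>2) * (\<Sum>t\<in>I. (sqrt (w t) * x t)\<^sup>2)"
    by (rule Cauchy_Schwarz_ineq_sum)
  also have "\<dots> = (\<Sum>t\<in>I. w t) * (\<Sum>t\<in>I. w t * (x t)\<^sup>2)"
    using assms by (intro arg_cong2[where f="(*)"] sum.cong) (auto simp: power_mult_distrib)
  finally show ?thesis .
qed

definition emp_grad :: "('a::real_normed_vector \<Rightarrow> 'z \<Rightarrow> 'a) \<Rightarrow> nat \<Rightarrow> (nat \<Rightarrow> 'z) \<Rightarrow> 'a \<Rightarrow> 'a" where
  "emp_grad grad n S w = (1 / real n) *\<^sub>R (\<Sum>j<n. grad w (S j))"

lemma gd_iter_Suc_emp_grad: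
  "gd_iter grad eta n W1 S (Suc k) =
     gd_iter grad eta n W1 S k - eta (Suc k) *\<^sub>R emp_grad grad n S (gd_iter grad eta n W1 S k)"
  by (simp add: emp_grad_def)

locale convex_smooth_gd =
  fixes f :: "'a::real_inner \<Rightarrow> 'z \<Rightarrow> real" and grad :: "'a \<Rightarrow> 'z \<Rightarrow> 'a"
    and \<beta> :: real and eta :: "nat \<Rightarrow> real" and n :: nat and W1 :: 'a
  assumes gradient: "\<And>w z. GDERIV (\<lambda>u. f u z) w :> grad w z"
    and convex: "\<And>z. convex_on UNIV (\<lambda>w. f w z)"
    and beta_pos: "\<beta> > 0"
    and smooth: "\<And>w u z. norm (grad w z - grad u z) \<le> \<beta> * norm (w - u)"
    and f_nonneg: "\<And>w z. f w z \<ge> 0"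
begin

abbreviation W :: "(nat \<Rightarrow> 'z) \<Rightarrow> nat \<Rightarrow> 'a" where
  "W S k \<equiv> gd_iter grad eta n W1 S k"

lemma loss_gradient_lower_bound: "f x z + grad x z \<bullet> (y - x) \<le> f y z"
  by (rule convex_gderiv_lower_bound[OF gradient convex])

lemma loss_gradient_self_bound: "(norm (grad x z))\<^sup>2 \<le> 2 * \<beta> * f x z"
  by (rule gderiv_lipschitz_nonneg_self_bound[OF gradient smooth beta_pos f_nonneg])

lemma loss_gradient_cocoercive:
  "(norm (grad x z - grad y z))\<^sup>2 \<le> \<beta> * ((grad x z - grad y z) \<bullet> (x - y))"
  by (rule convex_gderiv_lipschitz_cocoercive[OF gradient convex smooth beta_pos])

lemma emp_risk_nonneg: "emp_risk f n S w \<ge> 0"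
  by (simp add: emp_risk_def f_nonneg sum_nonneg)

lemma emp_risk_gradient_lower_bound:
  "emp_risk f n S x - emp_risk f n S v \<le> emp_grad grad n S x \<bullet> (x - v)"
proof -
  have "(\<Sum>j<n. f x (S j) - f v (S j)) \<le> (\<Sum>j<n. grad x (S j) \<bullet> (x - v))"
  proof (rule sum_mono)
    fix j
    show "f x (S j) - f v (S j) \<le> grad x (S j) \<bullet> (x - v)"
      using loss_gradient_lower_bound[of x "S j" v] by (simp add: inner_diff_right)
  qed
  then have "(\<Sum>j<n. f x (S j) - f v (S j)) / n \<le> (\<Sum>j<n. grad x (S j) \<bullet> (x - v)) / n"
    by (rule divide_right_mono) simp
  then show ?thesis
    by (simp add: emp_risk_def emp_grad_def sum_subtractf inner_sum_left diff_divide_distrib)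
qed

lemma emp_grad_self_bound: "(norm (emp_grad grad n S x))\<^sup>2 \<le> 2 * \<beta> * emp_risk f n S x"
proof -
  have "(norm (\<Sum>j<n. grad x (S j)))\<^sup>2 \<le> (\<Sum>j<n. norm (grad x (S j)))\<^sup>2"
    by (simp add: power_mono norm_sum)
  also have "\<dots> \<le> (\<Sum>j<n. (norm (grad x (S j)))\<^sup>2) * n"
    using sum_squared_le_sum_of_squares[of "\<lambda>j. norm (grad x (S j))" "{..<n}"] by simp
  also have "\<dots> \<le> (\<Sum>j<n. 2 * \<beta> * f x (S j)) * n"
    by (intro mult_right_mono sum_mono loss_gradient_self_bound) auto
  finally have "(norm (\<Sum>j<n. grad x (S j)))\<^sup>2 / (real n)\<^sup>2 \<le> (\<Sum>j<n. 2 * \<beta> * f x (S j)) * n / (real n)\<^sup>2"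
    by (simp add: divide_right_mono)
  then show ?thesis
    by (cases "n = 0")
      (simp_all add: emp_grad_def emp_risk_def power_divide sum_distrib_left[symmetric] power2_eq_square)
qed

lemma gd_step_distance:
  assumes eta: "0 \<le> eta (Suc k)" "eta (Suc k) \<le> 1 / (2 * \<beta>)"
  shows "(norm (W S (Suc k) - v))\<^sup>2 \<le> (norm (W S k - v))\<^sup>2
           - eta (Suc k) * emp_risk f n S (W S k) + 2 * eta (Suc k) * emp_risk f n S v"
proof -
  define e where "e = eta (Suc k)"
  define x where "x = W S k"
  define G where "G = emp_grad grad n S x"
  define R where "R = emp_risk f n S"
  have "(norm (W S (Suc k) - v))\<^sup>2 = (norm (x - v))\<^sup>2 - 2 * e * (G \<bullet> (x - v)) + e\<^sup>2 * (norm G)\<^sup>2"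
    unfolding gd_iter_Suc_emp_grad power2_norm_eq_inner
    by (simp add: e_def x_def G_def inner_diff_left inner_diff_right inner_commute
        power2_eq_square algebra_simps)
  moreover have "2 * e * (R x - R v) \<le> 2 * e * (G \<bullet> (x - v))"
    using eta emp_risk_gradient_lower_bound
    by (intro mult_left_mono) (auto simp: e_def R_def G_def)
  moreover have "e\<^sup>2 * (norm G)\<^sup>2 \<le> e * R x"
  proof -
    have "e\<^sup>2 * (norm G)\<^sup>2 \<le> e\<^sup>2 * (2 * \<beta> * R x)"
      using emp_grad_self_bound by (intro mult_left_mono) (auto simp: G_def R_def)
    also have "\<dots> = e * (2 * \<beta> * e) * R x"
      by (simp add: power2_eq_square)
    also have "\<dots> \<le> e * 1 * R x"
      using eta beta_pos emp_risk_nonneg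
      by (intro mult_right_mono mult_left_mono) (auto simp: e_def R_def field_simps)
    finally show ?thesis by simp
  qed
  ultimately show ?thesis
    by (simp add: e_def x_def R_def algebra_simps)
qed

lemma gd_regret_bound:
  assumes eta: "\<And>t. t \<in> {1..k} \<Longrightarrow> 0 < eta t \<and> eta t \<le> 1 / (2 * \<beta>)"
  shows "(norm (W S k - v))\<^sup>2 + (\<Sum>t\<in>{1..k}. eta t * emp_risk f n S (W S (t - 1)))
           \<le> (norm (W1 - v))\<^sup>2 + 2 * emp_risk f n S v * (\<Sum>t\<in>{1..k}. eta t)"
  using eta
proof (induction k)
  case (Suc k)
  have "0 \<le> eta (Suc k)" "eta (Suc k) \<le> 1 / (2 * \<beta>)"
    using Suc.prems[of "Suc k"] by auto
  from gd_step_distance[OF this, of S v] Suc.IH Suc.prems show ?case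
    by (simp add: algebra_simps)
qed simp

lemma gd_step_stability:
  fixes S :: "nat \<Rightarrow> 'z" and z :: 'z
  assumes i: "i < n" and eta: "0 < eta (Suc k)" "eta (Suc k) \<le> 1 / (2 * \<beta>)"
  defines "S' \<equiv> S(i := z)"
  shows "norm (W S (Suc k) - W S' (Suc k)) \<le> norm (W S k - W S' k)
           + eta (Suc k) / n * (norm (grad (W S k) (S i)) + norm (grad (W S' k) z))"
proof -
  define x where "x = W S k"
  define y where "y = W S' k"
  define c where "c = eta (Suc k) / n"
  define J where "J = {..<n} - {i}"
  have c: "c \<ge> 0"
    using eta by (simp add: c_def)
  have "c * card J * \<beta> \<le> eta (Suc k) * \<beta>"
    using i eta beta_pos unfolding c_def J_def
    by (intro mult_right_mono) (auto simp: field_simps of_nat_diff)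
  also have "\<dots> \<le> 2"
    using eta beta_pos by (simp add: field_simps)
  finally have step: "c * card J * \<beta> \<le> 2" .
  have split: "(\<Sum>j<n. h j) = h i + (\<Sum>j\<in>J. h j)" for h :: "nat \<Rightarrow> 'a"
    unfolding J_def using i by (simp add: sum.remove)
  txt \<open>The \<open>n - 1\<close> common samples give a non-expansive step by co-coercivity; only the
    replaced sample contributes to the divergence.\<close>
  have "W S (Suc k) - W S' (Suc k) = (x - y) - c *\<^sub>R ((\<Sum>j<n. grad x (S j)) - (\<Sum>j<n. grad y (S' j)))"
    by (simp add: x_def y_def c_def algebra_simps)
  also have "(\<Sum>j<n. grad x (S j)) - (\<Sum>j<n. grad y (S' j))
      = (grad x (S i) - grad y z) + (\<Sum>j\<in>J. grad x (S j) - grad y (S j))"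
    unfolding split by (simp add: S'_def J_def sum_subtractf)
  also have "(x - y) - c *\<^sub>R \<dots> =
      ((x - y) - c *\<^sub>R (\<Sum>j\<in>J. grad x (S j) - grad y (S j))) - c *\<^sub>R (grad x (S i) - grad y z)"
    by (simp add: algebra_simps)
  also have "norm \<dots> \<le> norm ((x - y) - c *\<^sub>R (\<Sum>j\<in>J. grad x (S j) - grad y (S j)))
      + norm (c *\<^sub>R (grad x (S i) - grad y z))"
    by (rule norm_triangle_ineq4)
  also have "\<dots> \<le> norm (x - y) + c * (norm (grad x (S i)) + norm (grad y z))"
  proof (rule add_mono)
    show "norm ((x - y) - c *\<^sub>R (\<Sum>j\<in>J. grad x (S j) - grad y (S j))) \<le> norm (x - y)"
      using loss_gradient_cocoercive beta_pos c step
      by (intro cocoercive_sum_step_nonexpansive) (auto simp: J_def)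
    show "norm (c *\<^sub>R (grad x (S i) - grad y z)) \<le> c * (norm (grad x (S i)) + norm (grad y z))"
      using c by (simp add: mult_left_mono norm_triangle_ineq4)
  qed
  finally show ?thesis
    by (simp add: x_def y_def c_def)
qed

lemma gd_stability:
  assumes i: "i < n" and eta: "\<And>t. t \<in> {1..k} \<Longrightarrow> 0 < eta t \<and> eta t \<le> 1 / (2 * \<beta>)"
  shows "norm (W S k - W (S(i := z)) k) \<le> (\<Sum>t\<in>{1..k}. eta t / n *
           (norm (grad (W S (t - 1)) (S i)) + norm (grad (W (S(i := z)) (t - 1)) z)))"
  using eta
proof (induction k)
  case (Suc k)
  have "0 < eta (Suc k)" "eta (Suc k) \<le> 1 / (2 * \<beta>)"
    using Suc.prems[of "Suc k"] by auto
  moreover have "norm (W S k - W (S(i := z)) k) \<le> (\<Sum>t\<in>{1..k}. eta t / n *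
           (norm (grad (W S (t - 1)) (S i)) + norm (grad (W (S(i := z)) (t - 1)) z)))"
    by (rule Suc.IH) (use Suc.prems in auto)
  moreover have "(\<Sum>t\<in>{1..Suc k}. eta t / n *
           (norm (grad (W S (t - 1)) (S i)) + norm (grad (W (S(i := z)) (t - 1)) z)))
      = (\<Sum>t\<in>{1..k}. eta t / n *
           (norm (grad (W S (t - 1)) (S i)) + norm (grad (W (S(i := z)) (t - 1)) z)))
        + eta (Suc k) / n * (norm (grad (W S k) (S i)) + norm (grad (W (S(i := z)) k) z))"
    by simp
  ultimately show ?case
    using gd_step_stability[OF i, of k S z] by linarith
qed simp

lemma gd_stability_squared:
  assumes i: "i < n" and eta: "\<And>t. t \<in> {1..k} \<Longrightarrow> 0 < eta t \<and> eta t \<le> 1 / (2 * \<beta>)"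
  shows "(norm (W S k - W (S(i := z)) k))\<^sup>2 \<le> 2 * (\<Sum>t\<in>{1..k}. eta t) / (real n)\<^sup>2 *
           (\<Sum>t\<in>{1..k}. eta t * ((norm (grad (W S (t - 1)) (S i)))\<^sup>2
                                    + (norm (grad (W (S(i := z)) (t - 1)) z))\<^sup>2))"
proof -
  define a where "a t = norm (grad (W S (t - 1)) (S i))" for t
  define b where "b t = norm (grad (W (S(i := z)) (t - 1)) z)" for t
  have eta_nonneg: "t \<in> {1..k} \<Longrightarrow> 0 \<le> eta t" for t
    using eta by fastforce
  have "norm (W S k - W (S(i := z)) k) \<le> (\<Sum>t\<in>{1..k}. eta t * (a t + b t)) / n"
    using gd_stability[OF i eta] by (simp add: a_def b_def sum_divide_distrib)
  then have "(norm (W S k - W (S(i := z)) k))\<^sup>2 \<le> (\<Sum>t\<in>{1..k}. eta t * (a t + b t))\<^sup>2 / (real n)\<^sup>2"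
    using norm_ge_zero by (subst power_divide[symmetric]) (rule power_mono)
  also have "(\<Sum>t\<in>{1..k}. eta t * (a t + b t))\<^sup>2 \<le> (\<Sum>t\<in>{1..k}. eta t) * (\<Sum>t\<in>{1..k}. eta t * (a t + b t)\<^sup>2)"
    using eta_nonneg by (rule weighted_sum_squared_le)
  also have "\<dots> \<le> (\<Sum>t\<in>{1..k}. eta t) * (\<Sum>t\<in>{1..k}. eta t * (2 * ((a t)\<^sup>2 + (b t)\<^sup>2)))"
  proof (rule mult_left_mono)
    show "(\<Sum>t\<in>{1..k}. eta t * (a t + b t)\<^sup>2) \<le> (\<Sum>t\<in>{1..k}. eta t * (2 * ((a t)\<^sup>2 + (b t)\<^sup>2)))"
    proof (rule sum_mono)
      fix t assume "t \<in> {1..k}"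
      moreover have "(a t + b t)\<^sup>2 \<le> 2 * ((a t)\<^sup>2 + (b t)\<^sup>2)"
        using zero_le_power2[of "a t - b t"] unfolding power2_diff power2_sum by (simp add: algebra_simps)
      ultimately show "eta t * (a t + b t)\<^sup>2 \<le> eta t * (2 * ((a t)\<^sup>2 + (b t)\<^sup>2))"
        using eta_nonneg by (intro mult_left_mono) auto
    qed
    show "0 \<le> (\<Sum>t\<in>{1..k}. eta t)"
      using eta_nonneg by (rule sum_nonneg)
  qed
  also have "(\<Sum>t\<in>{1..k}. eta t) * (\<Sum>t\<in>{1..k}. eta t * (2 * ((a t)\<^sup>2 + (b t)\<^sup>2)))
      = 2 * (\<Sum>t\<in>{1..k}. eta t) * (\<Sum>t\<in>{1..k}. eta t * ((a t)\<^sup>2 + (b t)\<^sup>2))"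
    unfolding mult.left_commute[of "eta _" 2] sum_distrib_left[symmetric] by simp
  finally show ?thesis
    by (simp add: a_def b_def divide_right_mono fun_upd_def)
qed

end

lemma (in prob_space) nn_integral_pair_fst:
  assumes "g \<in> borel_measurable N"
  shows "(\<integral>\<^sup>+x. g (fst x) \<partial>(N \<Otimes>\<^sub>M M)) = (\<integral>\<^sup>+x. g x \<partial>N)"
proof -
  have "(\<integral>\<^sup>+x. g x \<partial>distr (N \<Otimes>\<^sub>M M) N fst) = (\<integral>\<^sup>+x. g (fst x) \<partial>(N \<Otimes>\<^sub>M M))"
    using assms by (intro nn_integral_distr) simp_all
  then show ?thesis
    by (simp add: distr_pair_fst)
qed

lemma distr_PiM_fun_upd:
  assumes M: "\<And>i. i \<in> I \<Longrightarrow> prob_space (M i)" and i: "i \<in> I"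
  shows "distr (PiM I M \<Otimes>\<^sub>M M i) (PiM I M) (\<lambda>(X, x). X(i := x)) = PiM I M"
proof (rule measure_eqI_PiM_infinite[symmetric, OF refl])
  interpret M': prob_space "M i" using M i by auto
  interpret I: prob_space "PiM I M" using M by (intro prob_space_PiM) auto
  have meas: "(\<lambda>(X, x). X(i := x)) \<in> measurable (PiM I M \<Otimes>\<^sub>M M i) (PiM I M)"
    using measurable_add_dim[of i I M] insert_absorb[OF i] by simp
  show "finite_measure (PiM I M)" by unfold_locales
  fix J A assume J: "finite J" "J \<subseteq> I" and A: "\<And>i. i \<in> J \<Longrightarrow> A i \<in> sets (M i)"
  let ?X = "prod_emb I M J (Pi\<^sub>E J A)"
  let ?B = "if i \<in> J then A i else space (M i)"
  have B: "?B \<in> sets (M i)" using A by auto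
  have "PiM I M ?X = (\<Prod>j\<in>J. M j (A j))" using M J A by (intro emeasure_PiM_emb) auto
  also have "\<dots> = M i ?B * (\<Prod>j\<in>J-{i}. M j (A j))"
    using prod.insert_remove[of J "\<lambda>j. M j (A j)" i] J M'.emeasure_space_1
    by (cases "i \<in> J") (auto simp: insert_absorb)
  also have "(\<Prod>j\<in>J-{i}. M j (A j)) = PiM I M (prod_emb I M (J-{i}) (Pi\<^sub>E (J-{i}) A))"
    using M J A by (intro emeasure_PiM_emb[symmetric]) auto
  also have "M i ?B * PiM I M (prod_emb I M (J-{i}) (Pi\<^sub>E (J-{i}) A)) =
      (PiM I M \<Otimes>\<^sub>M M i) (prod_emb I M (J-{i}) (Pi\<^sub>E (J-{i}) A) \<times> ?B)"
    using J A B by (subst M'.emeasure_pair_measure_Times) (auto intro!: sets_PiM_I simp: mult.commute)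
  also have "prod_emb I M (J-{i}) (Pi\<^sub>E (J-{i}) A) \<times> ?B =
      (\<lambda>(X, x). X(i := x)) -` ?X \<inter> space (PiM I M \<Otimes>\<^sub>M M i)"
    using A[of i, THEN sets.sets_into_space] i J unfolding set_eq_iff
    by (auto simp add: prod_emb_def space_pair_measure space_PiM PiE_iff extensional_def split: if_split_asm)
  also have "(PiM I M \<Otimes>\<^sub>M M i) \<dots> = distr (PiM I M \<Otimes>\<^sub>M M i) (PiM I M) (\<lambda>(X, x). X(i := x)) ?X"
    using J A meas by (subst emeasure_distr) (auto intro!: sets_PiM_I)
  finally show "PiM I M ?X = distr (PiM I M \<Otimes>\<^sub>M M i) (PiM I M) (\<lambda>(X, x). X(i := x)) ?X" .
qed simp

lemma nn_integral_PiM_pair_fun_upd: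
  assumes M: "\<And>i. i \<in> I \<Longrightarrow> prob_space (M i)" and i: "i \<in> I"
    and g: "g \<in> borel_measurable (PiM I M)"
  shows "(\<integral>\<^sup>+x. g ((fst x)(i := snd x)) \<partial>(PiM I M \<Otimes>\<^sub>M M i)) = (\<integral>\<^sup>+X. g X \<partial>PiM I M)"
proof -
  have meas: "(\<lambda>(X, x). X(i := x)) \<in> measurable (PiM I M \<Otimes>\<^sub>M M i) (PiM I M)"
    using measurable_add_dim[of i I M] insert_absorb[OF i] by simp
  have "(\<integral>\<^sup>+X. g X \<partial>PiM I M) = (\<integral>\<^sup>+X. g X \<partial>distr (PiM I M \<Otimes>\<^sub>M M i) (PiM I M) (\<lambda>(X, x). X(i := x)))"
    using distr_PiM_fun_upd[of I M i] M i by simp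
  also have "\<dots> = (\<integral>\<^sup>+x. g ((fst x)(i := snd x)) \<partial>(PiM I M \<Otimes>\<^sub>M M i))"
    using meas g by (subst nn_integral_distr) (simp_all add: case_prod_beta)
  finally show ?thesis ..
qed

lemma nn_integral_weighted_sum:
  assumes "\<And>t. t \<in> A \<Longrightarrow> g t \<in> borel_measurable M"
  shows "(\<integral>\<^sup>+x. (\<Sum>t\<in>A. ennreal (w t) * g t x) \<partial>M) = (\<Sum>t\<in>A. ennreal (w t) * (\<integral>\<^sup>+x. g t x \<partial>M))"
  using assms by (simp add: nn_integral_sum nn_integral_cmult)

lemma measurable_loss_at_component:
  assumes g: "(\<lambda>(w, z). g w z) \<in> borel_measurable (borel \<Otimes>\<^sub>M D)"
    and F: "F \<in> borel_measurable (PiM I (\<lambda>_. D))" and j: "j \<in> I"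
  shows "(\<lambda>S. g (F S) (S j)) \<in> borel_measurable (PiM I (\<lambda>_. D))"
proof -
  have "(\<lambda>S. (F S, S j)) \<in> measurable (PiM I (\<lambda>_. D)) (borel \<Otimes>\<^sub>M D)"
    using F j by (intro measurable_Pair measurable_component_singleton) auto
  from measurable_compose[OF this g] show ?thesis by simp
qed

lemma measurable_gd_iter:
  fixes grad :: "'a::euclidean_space \<Rightarrow> 'z \<Rightarrow> 'a"
  assumes grad: "(\<lambda>(w, z). grad w z) \<in> borel_measurable (borel \<Otimes>\<^sub>M D)"
  shows "(\<lambda>S. gd_iter grad eta n W1 S k) \<in> borel_measurable (PiM {..<n} (\<lambda>_. D))"
proof (induction k)
  case (Suc k)
  have "(\<lambda>S. grad (gd_iter grad eta n W1 S k) (S j)) \<in> borel_measurable (PiM {..<n} (\<lambda>_. D))"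
    if "j < n" for j
    using measurable_loss_at_component[OF grad Suc] that by simp
  then show ?case
    by (simp del: gd_iter.simps add: gd_iter.simps(2))
      (intro borel_measurable_diff borel_measurable_const_scaleR borel_measurable_sum Suc; simp)
qed simp

lemma gd_iter_permute:
  assumes p: "p permutes {..<n}" and S': "\<And>j. j < n \<Longrightarrow> S' j = S (p j)"
  shows "gd_iter grad eta n W1 S' k = gd_iter grad eta n W1 S k"
proof (induction k)
  case (Suc k)
  have "(\<Sum>j<n. grad w (S' j)) = (\<Sum>j<n. grad w (S j))" for w
    using S' sum.reindex_bij_betw[OF permutes_imp_bij[OF p], of "\<lambda>j. grad w (S j)"] by simp
  with Suc show ?case by simp
qed simp

text \<open>Exchangeability: transposing the coordinates \<open>i\<close> and \<open>j\<close> preserves the product measure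
  and leaves a permutation-invariant statistic \<open>F\<close> unchanged.\<close>

lemma nn_integral_PiM_exchange_component:
  fixes D :: "'z measure" and F :: "(nat \<Rightarrow> 'z) \<Rightarrow> 'a" and g :: "'a \<Rightarrow> 'z \<Rightarrow> ennreal"
    and n i j :: nat
  assumes D: "prob_space D" and i: "i < n" and j: "j < n"
    and F: "\<And>S S' p. p permutes {..<n} \<Longrightarrow> (\<And>m. m < n \<Longrightarrow> S' m = S (p m)) \<Longrightarrow> F S' = F S"
    and g: "(\<lambda>S. g (F S) (S j)) \<in> borel_measurable (PiM {..<n} (\<lambda>_. D))"
  shows "(\<integral>\<^sup>+S. g (F S) (S j) \<partial>PiM {..<n} (\<lambda>_. D)) = (\<integral>\<^sup>+S. g (F S) (S i) \<partial>PiM {..<n} (\<lambda>_. D))"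
proof -
  let ?P = "PiM {..<n} (\<lambda>_. D)"
  define \<tau> where "\<tau> S = (\<lambda>m\<in>{..<n}. S (Transposition.transpose i j m))" for S :: "nat \<Rightarrow> 'z"
  have \<tau>: "Transposition.transpose i j permutes {..<n}"
    using i j by (intro permutes_swap_id) auto
  have \<tau>_Pi: "Transposition.transpose i j \<in> {..<n} \<rightarrow> {..<n}"
    using i j by (auto simp: Transposition.transpose_def)
  have "\<tau> \<in> measurable ?P ?P"
    unfolding \<tau>_def using \<tau>_Pi
    by (intro measurable_restrict measurable_component_singleton) auto
  moreover have "distr ?P ?P \<tau> = ?P"
    unfolding \<tau>_def using distr_PiM_reindex[of "{..<n}" "\<lambda>_. D" "Transposition.transpose i j" "{..<n}"] D \<tau> \<tau>_Pi
    by (simp add: permutes_inj_on)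
  ultimately have "(\<integral>\<^sup>+S. g (F S) (S j) \<partial>?P) = (\<integral>\<^sup>+S. g (F (\<tau> S)) (\<tau> S j) \<partial>?P)"
    using nn_integral_distr[of \<tau> ?P ?P "\<lambda>S. g (F S) (S j)"] g by simp
  also have "\<dots> = (\<integral>\<^sup>+S. g (F S) (S i) \<partial>?P)"
    using F[OF \<tau>] j by (intro nn_integral_cong) (simp add: \<tau>_def)
  finally show ?thesis .
qed

lemma nn_integral_emp_risk_exchangeable:
  assumes D: "prob_space D" and i: "i < n"
    and f: "(\<lambda>(w, z). f w z) \<in> borel_measurable (borel \<Otimes>\<^sub>M D)" and f_nonneg: "\<And>w z. f w z \<ge> 0"
    and F_meas: "F \<in> borel_measurable (PiM {..<n} (\<lambda>_. D))"
    and F: "\<And>S S' p. p permutes {..<n} \<Longrightarrow> (\<And>m. m < n \<Longrightarrow> S' m = S (p m)) \<Longrightarrow> F S' = F S"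
  shows "(\<integral>\<^sup>+S. ennreal (emp_risk f n S (F S)) \<partial>PiM {..<n} (\<lambda>_. D))
       = (\<integral>\<^sup>+S. ennreal (f (F S) (S i)) \<partial>PiM {..<n} (\<lambda>_. D))"
proof -
  let ?P = "PiM {..<n} (\<lambda>_. D)"
  have meas: "(\<lambda>S. ennreal (f (F S) (S j))) \<in> borel_measurable ?P" if "j < n" for j
    using measurable_loss_at_component[OF f F_meas] that by simp
  have "ennreal (emp_risk f n S (F S)) = ennreal (1 / n) * (\<Sum>j<n. ennreal (f (F S) (S j)))" for S
    by (simp add: emp_risk_def f_nonneg sum_nonneg flip: ennreal_mult)
  then have "(\<integral>\<^sup>+S. ennreal (emp_risk f n S (F S)) \<partial>?P)
      = ennreal (1 / n) * (\<integral>\<^sup>+S. (\<Sum>j<n. ennreal (f (F S) (S j))) \<partial>?P)"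
    using meas by (simp add: nn_integral_cmult borel_measurable_sum)
  also have "\<dots> = ennreal (1 / n) * (\<Sum>j<n. \<integral>\<^sup>+S. ennreal (f (F S) (S j)) \<partial>?P)"
    using meas by (subst nn_integral_sum) auto
  also have "\<dots> = ennreal (1 / n) * (of_nat n * (\<integral>\<^sup>+S. ennreal (f (F S) (S i)) \<partial>?P))"
    using nn_integral_PiM_exchange_component[OF D i _ F meas] by simp
  also have "\<dots> = (\<integral>\<^sup>+S. ennreal (f (F S) (S i)) \<partial>?P)"
    using i by (simp add: mult.assoc[symmetric] ennreal_of_nat_eq_real_of_nat flip: ennreal_mult)
  finally show ?thesis .
qed

locale iid_convex_smooth_gd = convex_smooth_gd f grad \<beta> eta n W1 + D: prob_space D
  for f :: "'a::euclidean_space \<Rightarrow> 'z \<Rightarrow> real" and grad \<beta> eta n W1 and D :: "'z measure" +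
  fixes i T :: nat
  assumes i_less_n: "i < n"
    and f_meas: "(\<lambda>(w, z). f w z) \<in> borel_measurable (borel \<Otimes>\<^sub>M D)"
    and grad_meas: "(\<lambda>(w, z). grad w z) \<in> borel_measurable (borel \<Otimes>\<^sub>M D)"
    and step_sizes: "\<And>t. t \<in> {1..T} \<Longrightarrow> 0 < eta t \<and> eta t \<le> 1 / (2 * \<beta>)"
begin

abbreviation P :: "(nat \<Rightarrow> 'z) measure" where
  "P \<equiv> PiM {..<n} (\<lambda>_. D)"

abbreviation eta_sum :: real where
  "eta_sum \<equiv> \<Sum>t\<in>{1..T}. eta t"

definition eps_path :: ennreal where
  "eps_path = (\<Sum>t\<in>{1..T}. ennreal (eta t) *
     (\<integral>\<^sup>+Sz. ennreal ((norm (grad (W (fst Sz) (t - 1)) (fst Sz i)))\<^sup>2) \<partial>(P \<Otimes>\<^sub>M D)))"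

definition path_grad_sq :: "(nat \<Rightarrow> 'z) \<Rightarrow> ennreal" where
  "path_grad_sq S = (\<Sum>t\<in>{1..T}. ennreal (eta t) * ennreal ((norm (grad (W S (t - 1)) (S i)))\<^sup>2))"

lemma eta_nonneg: "t \<in> {1..T} \<Longrightarrow> eta t \<ge> 0"
  using step_sizes by fastforce

lemma eta_sum_nonneg: "eta_sum \<ge> 0"
  using eta_nonneg by (rule sum_nonneg)

lemma measurable_W: "(\<lambda>S. W S k) \<in> borel_measurable P"
  by (rule measurable_gd_iter[OF grad_meas])

lemma measurable_grad_W: "(\<lambda>S. grad (W S k) (S i)) \<in> borel_measurable P"
  using measurable_loss_at_component[OF grad_meas measurable_W] i_less_n by simp

lemma measurable_path_grad_sq: "path_grad_sq \<in> borel_measurable P"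
  unfolding path_grad_sq_def using measurable_grad_W by measurable

lemma eps_path_eq_nn_integral: "eps_path = (\<integral>\<^sup>+S. path_grad_sq S \<partial>P)"
proof -
  have meas: "(\<lambda>S. ennreal ((norm (grad (W S k) (S i)))\<^sup>2)) \<in> borel_measurable P" for k
    using measurable_grad_W by measurable
  have "(\<integral>\<^sup>+Sz. ennreal ((norm (grad (W (fst Sz) k) (fst Sz i)))\<^sup>2) \<partial>(P \<Otimes>\<^sub>M D))
      = (\<integral>\<^sup>+S. ennreal ((norm (grad (W S k) (S i)))\<^sup>2) \<partial>P)" for k
    using D.nn_integral_pair_fst[OF meas] by simp
  then have "eps_path = (\<Sum>t\<in>{1..T}. ennreal (eta t) *
      (\<integral>\<^sup>+S. ennreal ((norm (grad (W S (t - 1)) (S i)))\<^sup>2) \<partial>P))"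
    unfolding eps_path_def by simp
  also have "\<dots> = (\<integral>\<^sup>+S. path_grad_sq S \<partial>P)"
    unfolding path_grad_sq_def using meas by (rule nn_integral_weighted_sum[symmetric])
  finally show ?thesis .
qed

lemma path_grad_sq_eq_ennreal:
  "path_grad_sq S = ennreal (\<Sum>t\<in>{1..T}. eta t * (norm (grad (W S (t - 1)) (S i)))\<^sup>2)"
  unfolding path_grad_sq_def using eta_nonneg
  by (subst sum_ennreal[symmetric]) (auto simp: ennreal_mult)

lemma stability_le_path_grad_sq:
  "ennreal ((norm (W S T - W (S(i := z)) T))\<^sup>2)
     \<le> ennreal (2 * eta_sum / (real n)\<^sup>2) * (path_grad_sq S + path_grad_sq (S(i := z)))"
proof -
  let ?a = "\<lambda>t. eta t * (norm (grad (W S (t - 1)) (S i)))\<^sup>2"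
  let ?b = "\<lambda>t. eta t * (norm (grad (W (S(i := z)) (t - 1)) z))\<^sup>2"
  have nonneg: "0 \<le> sum ?a {1..T}" "0 \<le> sum ?b {1..T}"
    using eta_nonneg by (auto intro!: sum_nonneg)
  have "(norm (W S T - W (S(i := z)) T))\<^sup>2
      \<le> 2 * eta_sum / (real n)\<^sup>2 * (sum ?a {1..T} + sum ?b {1..T})"
    using gd_stability_squared[OF i_less_n step_sizes] by (simp add: distrib_left sum.distrib)
  then have "ennreal ((norm (W S T - W (S(i := z)) T))\<^sup>2)
      \<le> ennreal (2 * eta_sum / (real n)\<^sup>2 * (sum ?a {1..T} + sum ?b {1..T}))"
    by (rule ennreal_leI)
  also have "\<dots> = ennreal (2 * eta_sum / (real n)\<^sup>2) * (ennreal (sum ?a {1..T}) + ennreal (sum ?b {1..T}))"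
    using nonneg eta_sum_nonneg by (subst ennreal_mult) (auto simp: ennreal_plus)
  finally show ?thesis
    by (simp add: path_grad_sq_eq_ennreal)
qed

lemma expected_stability:
  "(\<integral>\<^sup>+Sz. ennreal ((norm (W (fst Sz) T - W ((fst Sz)(i := snd Sz)) T))\<^sup>2) \<partial>(P \<Otimes>\<^sub>M D))
     \<le> ennreal (4 / (real n)\<^sup>2 * eta_sum) * eps_path"
proof -
  let ?c = "ennreal (2 * eta_sum / (real n)\<^sup>2)"
  have upd: "(\<lambda>Sz. (fst Sz)(i := snd Sz)) \<in> measurable (P \<Otimes>\<^sub>M D) P"
    using i_less_n by (intro measurable_fun_upd[where J="{..<n}"]) auto
  have fst: "(\<lambda>Sz. path_grad_sq (fst Sz)) \<in> borel_measurable (P \<Otimes>\<^sub>M D)"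
    using measurable_path_grad_sq by measurable
  have "(\<integral>\<^sup>+Sz. ennreal ((norm (W (fst Sz) T - W ((fst Sz)(i := snd Sz)) T))\<^sup>2) \<partial>(P \<Otimes>\<^sub>M D))
      \<le> (\<integral>\<^sup>+Sz. ?c * (path_grad_sq (fst Sz) + path_grad_sq ((fst Sz)(i := snd Sz))) \<partial>(P \<Otimes>\<^sub>M D))"
    by (intro nn_integral_mono stability_le_path_grad_sq)
  also have "\<dots> = ?c * ((\<integral>\<^sup>+Sz. path_grad_sq (fst Sz) \<partial>(P \<Otimes>\<^sub>M D))
                      + (\<integral>\<^sup>+Sz. path_grad_sq ((fst Sz)(i := snd Sz)) \<partial>(P \<Otimes>\<^sub>M D)))"
    using fst measurable_compose[OF upd measurable_path_grad_sq]
    by (simp add: nn_integral_cmult nn_integral_add)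
  also have "\<dots> = ?c * (eps_path + eps_path)"
    using D.nn_integral_pair_fst[OF measurable_path_grad_sq] i_less_n
      nn_integral_PiM_pair_fun_upd[of "{..<n}" "\<lambda>_. D" i path_grad_sq, OF _ _ measurable_path_grad_sq]
    by (simp add: eps_path_eq_nn_integral D.prob_space_axioms)
  also have "\<dots> = ennreal (4 / (real n)\<^sup>2 * eta_sum) * eps_path"
  proof -
    have "ennreal (4 / (real n)\<^sup>2 * eta_sum) = ennreal 2 * ?c"
      using eta_sum_nonneg ennreal_mult[of 2 "2 * eta_sum / (real n)\<^sup>2"] by simp
    then show ?thesis
      by (simp flip: mult_2 add: ac_simps)
  qed
  finally show ?thesis .
qed

lemma measurable_emp_risk:
  assumes "F \<in> borel_measurable P"
  shows "(\<lambda>S. emp_risk f n S (F S)) \<in> borel_measurable P"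
proof -
  have "(\<lambda>S. f (F S) (S j)) \<in> borel_measurable P" if "j < n" for j
    using measurable_loss_at_component[OF f_meas assms] that by simp
  then show ?thesis
    unfolding emp_risk_def by (intro borel_measurable_divide borel_measurable_sum) simp_all
qed

lemma expected_loss_at_i_eq_risk:
  "(\<integral>\<^sup>+S. ennreal (f (W S k) (S i)) \<partial>P) = (\<integral>\<^sup>+S. ennreal (emp_risk f n S (W S k)) \<partial>P)"
  by (rule nn_integral_emp_risk_exchangeable[OF D.prob_space_axioms i_less_n f_meas f_nonneg
        measurable_W, symmetric]) (erule gd_iter_permute, assumption)

lemma regret_bound_ennreal:
  "(\<Sum>t\<in>{1..T}. ennreal (eta t) * ennreal (emp_risk f n S (W S (t - 1))))
     \<le> ennreal ((norm (W1 - v))\<^sup>2) + 2 * (ennreal (emp_risk f n S v) * ennreal eta_sum)"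
proof -
  have "(\<Sum>t\<in>{1..T}. ennreal (eta t) * ennreal (emp_risk f n S (W S (t - 1))))
      = ennreal (\<Sum>t\<in>{1..T}. eta t * emp_risk f n S (W S (t - 1)))"
    using eta_nonneg emp_risk_nonneg by (subst sum_ennreal[symmetric]) (auto simp: ennreal_mult)
  also have "\<dots> \<le> ennreal ((norm (W1 - v))\<^sup>2 + 2 * (emp_risk f n S v * eta_sum))"
    using gd_regret_bound[where k=T and S=S and v=v, OF step_sizes]
      zero_le_power2[of "norm (W S T - v)"]
    by (intro ennreal_leI) linarith
  also have "\<dots> = ennreal ((norm (W1 - v))\<^sup>2) + 2 * (ennreal (emp_risk f n S v) * ennreal eta_sum)"
    using emp_risk_nonneg eta_sum_nonneg by (simp add: ennreal_plus ennreal_mult)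
  finally show ?thesis .
qed

lemma expected_path_bound:
  assumes v: "v \<in> borel_measurable P"
  shows "eps_path \<le> ennreal (8 * \<beta>) *
           ((\<integral>\<^sup>+Sz. ennreal ((norm (W1 - v (fst Sz)))\<^sup>2) \<partial>(P \<Otimes>\<^sub>M D))
            + (\<integral>\<^sup>+Sz. ennreal (emp_risk f n (fst Sz) (v (fst Sz))) \<partial>(P \<Otimes>\<^sub>M D)) * ennreal eta_sum)"
proof -
  define dist where "dist = (\<integral>\<^sup>+S. ennreal ((norm (W1 - v S))\<^sup>2) \<partial>P)"
  define risk where "risk = (\<integral>\<^sup>+S. ennreal (emp_risk f n S (v S)) \<partial>P)"
  have meas_loss: "(\<lambda>S. ennreal (f (W S k) (S i))) \<in> borel_measurable P" for k
    using measurable_loss_at_component[OF f_meas measurable_W] i_less_n by simp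
  have meas_risk: "(\<lambda>S. ennreal (emp_risk f n S (F S))) \<in> borel_measurable P"
    if "F \<in> borel_measurable P" for F
    using measurable_emp_risk[OF that] by simp
  have meas_dist: "(\<lambda>S. ennreal ((norm (W1 - v S))\<^sup>2)) \<in> borel_measurable P"
    using v by measurable
  have "path_grad_sq S \<le> ennreal (2 * \<beta>) * (\<Sum>t\<in>{1..T}. ennreal (eta t) * ennreal (f (W S (t - 1)) (S i)))"
    for S
    unfolding path_grad_sq_def sum_distrib_left
  proof (rule sum_mono)
    fix t
    have "ennreal ((norm (grad (W S (t - 1)) (S i)))\<^sup>2) \<le> ennreal (2 * \<beta>) * ennreal (f (W S (t - 1)) (S i))"
      using loss_gradient_self_bound beta_pos f_nonneg by (simp add: ennreal_leI flip: ennreal_mult)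
    then show "ennreal (eta t) * ennreal ((norm (grad (W S (t - 1)) (S i)))\<^sup>2)
        \<le> ennreal (2 * \<beta>) * (ennreal (eta t) * ennreal (f (W S (t - 1)) (S i)))"
      by (simp add: mult_left_mono mult.left_commute)
  qed
  then have "eps_path \<le> (\<integral>\<^sup>+S. ennreal (2 * \<beta>) *
      (\<Sum>t\<in>{1..T}. ennreal (eta t) * ennreal (f (W S (t - 1)) (S i))) \<partial>P)"
    unfolding eps_path_eq_nn_integral by (rule nn_integral_mono)
  also have "\<dots> = ennreal (2 * \<beta>) *
      (\<Sum>t\<in>{1..T}. ennreal (eta t) * (\<integral>\<^sup>+S. ennreal (f (W S (t - 1)) (S i)) \<partial>P))"
    using meas_loss by (simp add: nn_integral_cmult borel_measurable_sum nn_integral_weighted_sum)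
  also have "\<dots> = ennreal (2 * \<beta>) *
      (\<integral>\<^sup>+S. (\<Sum>t\<in>{1..T}. ennreal (eta t) * ennreal (emp_risk f n S (W S (t - 1)))) \<partial>P)"
    using meas_risk[OF measurable_W] by (simp add: expected_loss_at_i_eq_risk nn_integral_weighted_sum)
  also have "\<dots> \<le> ennreal (2 * \<beta>) *
      (\<integral>\<^sup>+S. ennreal ((norm (W1 - v S))\<^sup>2) + 2 * (ennreal (emp_risk f n S (v S)) * ennreal eta_sum) \<partial>P)"
    by (intro mult_left_mono nn_integral_mono regret_bound_ennreal) simp
  also have "\<dots> = ennreal (2 * \<beta>) * (dist + 2 * (risk * ennreal eta_sum))"
    using meas_dist meas_risk[OF v]
    by (simp add: dist_def risk_def nn_integral_add nn_integral_cmult nn_integral_multc)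
  also have "\<dots> \<le> ennreal (2 * \<beta>) * (4 * (dist + risk * ennreal eta_sum))"
  proof (rule mult_left_mono)
    have "dist \<le> 4 * dist"
      using mult_right_mono[of 1 4 dist] by simp
    moreover have "2 * (risk * ennreal eta_sum) \<le> 4 * (risk * ennreal eta_sum)"
      by (rule mult_right_mono) auto
    ultimately show "dist + 2 * (risk * ennreal eta_sum) \<le> 4 * (dist + risk * ennreal eta_sum)"
      by (simp add: distrib_left add_mono)
  qed simp
  also have "\<dots> = ennreal (8 * \<beta>) * (dist + risk * ennreal eta_sum)"
  proof -
    have "ennreal (8 * \<beta>) = ennreal (2 * \<beta>) * 4"
      using beta_pos ennreal_mult[of "2 * \<beta>" 4] by simp
    then show ?thesis
      by (simp only: mult.assoc)
  qed
  finally show ?thesis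
    unfolding D.nn_integral_pair_fst[OF meas_dist] D.nn_integral_pair_fst[OF meas_risk[OF v]]
      dist_def risk_def .
qed

end

theorem theorem10:
  fixes D :: "'z measure"
    and f :: "'a::euclidean_space \<Rightarrow> 'z \<Rightarrow> real"
    and grad :: "'a \<Rightarrow> 'z \<Rightarrow> 'a"
    and \<beta> :: real and eta :: "nat \<Rightarrow> real" and W1 :: 'a
    and n T i :: nat
    and Wstar :: "(nat \<Rightarrow> 'z) \<Rightarrow> 'a"
  assumes D: "prob_space D"
    and i: "i < n"
    and f_nonneg: "\<And>w z. f w z \<ge> 0"
    and f_meas: "(\<lambda>(w, z). f w z) \<in> borel_measurable (borel \<Otimes>\<^sub>M D)"
    and grad_meas: "(\<lambda>(w, z). grad w z) \<in> borel_measurable (borel \<Otimes>\<^sub>M D)"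
    and gradient: "\<And>w z. GDERIV (\<lambda>u. f u z) w :> grad w z"
    and convex: "\<And>z. convex_on UNIV (\<lambda>w. f w z)"
    and beta_pos: "\<beta> > 0"
    and smooth: "\<And>w u z. norm (grad w z - grad u z) \<le> \<beta> * norm (w - u)"
    and eta: "\<And>t. t \<in> {1..T+1} \<Longrightarrow> 0 < eta t \<and> eta t \<le> 1 / (2 * \<beta>)"
    and Wstar_min: "\<And>S w. S \<in> space (PiM {..<n} (\<lambda>_. D)) \<Longrightarrow>
                       emp_risk f n S (Wstar S) \<le> emp_risk f n S w"
    and Wstar_meas: "Wstar \<in> borel_measurable (PiM {..<n} (\<lambda>_. D))"
  shows
   "(let M = PiM {..<n} (\<lambda>_. D) \<Otimes>\<^sub>M D;
         A = (\<lambda>S. gd_iter grad eta n W1 S T);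
         W = (\<lambda>S t. gd_iter grad eta n W1 S (t - 1));
         sum_eta = (\<Sum>t\<in>{1..T}. eta t);
         eps_stab = (\<integral>\<^sup>+ Sz. ennreal ((norm (A (fst Sz) - A ((fst Sz)(i := snd Sz))))\<^sup>2) \<partial>M);
         eps_path = (\<Sum>t\<in>{1..T}. ennreal (eta t) *
                        (\<integral>\<^sup>+ Sz. ennreal ((norm (grad (W (fst Sz) t) (fst Sz i)))\<^sup>2) \<partial>M));
         eps_c = (\<integral>\<^sup>+ Sz. ennreal (emp_risk f n (fst Sz) (Wstar (fst Sz))) \<partial>M);
         dist0 = (\<integral>\<^sup>+ Sz. ennreal ((norm (W1 - Wstar (fst Sz)))\<^sup>2) \<partial>M)
     in eps_stab \<le> ennreal (4 / (real n)\<^sup>2 * sum_eta) * eps_path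
        \<and> ennreal (4 / (real n)\<^sup>2 * sum_eta) * eps_path
            \<le> ennreal (32 * \<beta> * sum_eta / (real n)\<^sup>2) * (dist0 + eps_c * ennreal sum_eta))"
proof -
  interpret iid_convex_smooth_gd f grad \<beta> eta n W1 D i T
    using gradient convex beta_pos smooth f_nonneg i f_meas grad_meas eta
    by (intro iid_convex_smooth_gd.intro convex_smooth_gd.intro iid_convex_smooth_gd_axioms.intro D)
      simp_all
  have "ennreal (4 / (real n)\<^sup>2 * eta_sum) * eps_path
      \<le> ennreal (4 / (real n)\<^sup>2 * eta_sum) * ennreal (8 * \<beta>) *
          ((\<integral>\<^sup>+Sz. ennreal ((norm (W1 - Wstar (fst Sz)))\<^sup>2) \<partial>(P \<Otimes>\<^sub>M D))
           + (\<integral>\<^sup>+Sz. ennreal (emp_risk f n (fst Sz) (Wstar (fst Sz))) \<partial>(P \<Otimes>\<^sub>M D)) * ennreal eta_sum)"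
    unfolding mult.assoc by (intro mult_left_mono expected_path_bound Wstar_meas) simp
  also have "ennreal (4 / (real n)\<^sup>2 * eta_sum) * ennreal (8 * \<beta>) = ennreal (32 * \<beta> * eta_sum / (real n)\<^sup>2)"
    using eta_sum_nonneg beta_pos ennreal_mult[of "4 / (real n)\<^sup>2 * eta_sum" "8 * \<beta>"]
    by (simp add: ac_simps)
  finally have "ennreal (4 / (real n)\<^sup>2 * eta_sum) * eps_path \<le> ennreal (32 * \<beta> * eta_sum / (real n)\<^sup>2) *
          ((\<integral>\<^sup>+Sz. ennreal ((norm (W1 - Wstar (fst Sz)))\<^sup>2) \<partial>(P \<Otimes>\<^sub>M D))
           + (\<integral>\<^sup>+Sz. ennreal (emp_risk f n (fst Sz) (Wstar (fst Sz))) \<partial>(P \<Otimes>\<^sub>M D)) * ennreal eta_sum)" .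
  with expected_stability show ?thesis
    unfolding Let_def eps_path_def by (intro conjI)
qed

end
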